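(* Let $d$ be a square-free positive integer such that $E=\mathbb{Q}(\sqrt{-d})$ has class number at least $4$, and let $\mathcal{O}$ be its ring of integers. Let $\mathfrak{P}$ be a non-principal prime ideal of $\mathcal{O}$ and let $p$ be the prime number lying below $\mathfrak{P}$. Suppose $p\mid d$. Then for every positive integer $r\geq (p-1)d/p$, the unary Hermitian lattice $\mathfrak{P}v$, where $v$ spans a one-dimensional Hermitian space over $E$ with $h(v)=r/p$, is represented by $I_4$.
   Context: A Hermitian space is a finite-dimensional $E$-vector space with a map $h$ that is $E$-linear in the first argument and satisfies $h(v,w)=\overline{h(w,v)}$; $h(v):=h(v,v)$. $I_4$ is the Hermitian lattice $\mathcal{O}^4$ with $h(x,y)=\sum_{i=1}^4 x_i\overline{y_i}$. A lattice $L$ is represented by $I_4$ if there is an injective $\mathcal{O}$-linear map $L\to I_4$ preserving $h$. *)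

theory Defs
  imports "HOL-Analysis.Analysis" "HOL-Computational_Algebra.Squarefree"
          "HOL-Computational_Algebra.Polynomial"
begin

definition quad_field :: "nat \<Rightarrow> complex set" where
  "quad_field d = {of_real (real_of_rat a) + of_real (real_of_rat b) * \<i> * of_real (sqrt (real d)) | a b. True}"

definition alg_int :: "complex \<Rightarrow> bool" where
  "alg_int z \<longleftrightarrow> (\<exists>q :: int poly. lead_coeff q = 1 \<and> poly (map_poly of_int q) z = 0)"

definition ring_of_ints :: "nat \<Rightarrow> complex set" where
  "ring_of_ints d = {z \<in> quad_field d. alg_int z}"

definition is_ideal :: "nat \<Rightarrow> complex set \<Rightarrow> bool" where
  "is_ideal d I \<longleftrightarrow> I \<subseteq> ring_of_ints d \<and> 0 \<in> I \<and>
     (\<forall>x\<in>I. \<forall>y\<in>I. x + y \<in> I) \<and> (\<forall>x\<in>I. - x \<in> I) \<and>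
     (\<forall>a\<in>ring_of_ints d. \<forall>x\<in>I. a * x \<in> I)"

definition principal_ideal :: "nat \<Rightarrow> complex set \<Rightarrow> bool" where
  "principal_ideal d I \<longleftrightarrow> (\<exists>a\<in>ring_of_ints d. I = {a * x | x. x \<in> ring_of_ints d})"

definition prime_ideal :: "nat \<Rightarrow> complex set \<Rightarrow> bool" where
  "prime_ideal d P \<longleftrightarrow> is_ideal d P \<and> P \<noteq> {0} \<and> P \<noteq> ring_of_ints d \<and>
     (\<forall>a\<in>ring_of_ints d. \<forall>b\<in>ring_of_ints d. a * b \<in> P \<longrightarrow> a \<in> P \<or> b \<in> P)"

definition nonzero_ideals :: "nat \<Rightarrow> complex set set" where
  "nonzero_ideals d = {I. is_ideal d I \<and> I \<noteq> {0}}"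

definition ideal_equiv :: "nat \<Rightarrow> (complex set \<times> complex set) set" where
  "ideal_equiv d = {(I, J). I \<in> nonzero_ideals d \<and> J \<in> nonzero_ideals d \<and>
     (\<exists>a\<in>ring_of_ints d - {0}. \<exists>b\<in>ring_of_ints d - {0}. (\<lambda>x. a * x) ` I = (\<lambda>x. b * x) ` J)}"

definition class_number :: "nat \<Rightarrow> nat" where
  "class_number d = card (nonzero_ideals d // ideal_equiv d)"

text \<open>A lattice L (an O-submodule of a one-dimensional Hermitian space, realised
  as a subset of E with Hermitian form hL) is represented by I_4 = O^4.\<close>
definition represented_by_I4 :: "nat \<Rightarrow> complex set \<Rightarrow> (complex \<Rightarrow> complex \<Rightarrow> complex) \<Rightarrow> bool" where
  "represented_by_I4 d L hL \<longleftrightarrow> (\<exists>\<sigma> :: complex \<Rightarrow> complex ^ 4.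
      (\<forall>x\<in>L. \<forall>i. \<sigma> x $ i \<in> ring_of_ints d) \<and>
      (\<forall>x\<in>L. \<forall>y\<in>L. \<sigma> (x + y) = \<sigma> x + \<sigma> y) \<and>
      (\<forall>a\<in>ring_of_ints d. \<forall>x\<in>L. \<forall>i. \<sigma> (a * x) $ i = a * (\<sigma> x $ i)) \<and>
      inj_on \<sigma> L \<and>
      (\<forall>x\<in>L. \<forall>y\<in>L. (\<Sum>i\<in>UNIV. \<sigma> x $ i * cnj (\<sigma> y $ i)) = hL x y))"

end

theory Submission
  imports Defs
begin

text \<open>
  Write \<open>d = p m\<close>. As \<open>d\<close> is squarefree, \<open>p\<close> does not divide \<open>m\<close>, so the bound on \<open>r\<close>
  gives \<open>r = p A + m B\<close> with \<open>A, B \<ge> 0\<close>, and by Lagrange \<open>A = \<Sum> a\<^sub>i\<^sup>2\<close> and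
  \<open>B = \<Sum> b\<^sub>i\<^sup>2\<close> are sums of four squares. The weights \<open>w\<^sub>i = a\<^sub>i + b\<^sub>i \<surd>-d / p\<close> satisfy
  \<open>\<Sum> |w\<^sub>i|\<^sup>2 = A + m B / p = r / p\<close>, so \<open>x \<mapsto> (x w\<^sub>i)\<^sub>i\<close> embeds \<open>P v\<close> isometrically into \<open>E\<^sup>4\<close>.
  The image lies in \<open>O\<^sup>4\<close>: for \<open>x = \<alpha> + \<beta> \<surd>-d\<close> in \<open>P\<close> the numbers \<open>2\<alpha>\<close>, \<open>2\<beta>\<close> are integers
  and the norm \<open>\<alpha>\<^sup>2 + d \<beta>\<^sup>2\<close> lies in \<open>P \<inter> \<int> = p\<int>\<close>, so \<open>x w\<^sub>i\<close> has integral trace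
  \<open>2\<alpha> a\<^sub>i - m (2\<beta>) b\<^sub>i\<close> and integral norm \<open>N(x) (p a\<^sub>i\<^sup>2 + m b\<^sub>i\<^sup>2) / p\<close>.
\<close>

section \<open>Lagrange's four-square theorem\<close>

definition four_squares :: "int \<Rightarrow> bool" where
  "four_squares n \<longleftrightarrow> (\<exists>a b c e. n = a\<^sup>2 + b\<^sup>2 + c\<^sup>2 + e\<^sup>2)"

lemma euler_four_square_identity:
  fixes a1 a2 a3 a4 b1 b2 b3 b4 :: int
  shows "(a1\<^sup>2 + a2\<^sup>2 + a3\<^sup>2 + a4\<^sup>2) * (b1\<^sup>2 + b2\<^sup>2 + b3\<^sup>2 + b4\<^sup>2) =
    (a1*b1 + a2*b2 + a3*b3 + a4*b4)\<^sup>2 + (a1*b2 - a2*b1 + a3*b4 - a4*b3)\<^sup>2 +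
    (a1*b3 - a3*b1 + a4*b2 - a2*b4)\<^sup>2 + (a1*b4 - a4*b1 + a2*b3 - a3*b2)\<^sup>2"
  by algebra

lemma four_squares_mult:
  assumes "four_squares x" and "four_squares y"
  shows "four_squares (x * y)"
  using assms euler_four_square_identity unfolding four_squares_def by metis

lemma odd_prime_dvd_sum_two_squares_plus_one:
  fixes p h :: int
  assumes "prime p" and "p = 2 * h + 1"
  shows "\<exists>x y. 0 \<le> x \<and> x \<le> h \<and> 0 \<le> y \<and> y \<le> h \<and> p dvd x\<^sup>2 + y\<^sup>2 + 1"
proof (rule ccontr)
  assume no_solution: "\<not> ?thesis"
  define A where "A = {0..h}"
  define f where "f x = x\<^sup>2 mod p" for x
  define g where "g y = (- 1 - y\<^sup>2) mod p" for y
  have "h \<ge> 0"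
    using prime_ge_2_int[OF assms(1)] assms(2) by linarith
  have eq_if_dvd: "x = y" if "x \<in> A" "y \<in> A" "p dvd (x - y) * (x + y)" for x y
  proof -
    have "p dvd x - y \<or> p dvd x + y"
      using that(3) assms(1) prime_dvd_mult_iff by blast
    moreover have "\<bar>x - y\<bar> < p" "0 \<le> x + y" "x + y < p"
      using that(1,2) assms(2) by (auto simp: A_def)
    ultimately have "x - y = 0 \<or> x + y = 0"
      using dvd_imp_le_int[of "x - y" p] dvd_imp_le_int[of "x + y" p] by auto
    then show ?thesis
      using that(1,2) by (auto simp: A_def)
  qed
  \<comment> \<open>Pigeonhole: \<open>f\<close> and \<open>g\<close> take \<open>h + 1\<close> distinct values each among the \<open>2 * h + 1\<close> residues.\<close>
  have "inj_on f A"
  proof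
    fix x y assume "x \<in> A" "y \<in> A" "f x = f y"
    then show "x = y"
      using eq_if_dvd by (auto simp: f_def mod_eq_dvd_iff power2_eq_square algebra_simps)
  qed
  moreover have "inj_on g A"
  proof
    fix x y assume "x \<in> A" "y \<in> A" "g x = g y"
    then show "x = y"
      using eq_if_dvd[of y x] by (auto simp: g_def mod_eq_dvd_iff power2_eq_square algebra_simps)
  qed
  moreover have "f ` A \<inter> g ` A = {}"
    using no_solution by (auto simp: A_def f_def g_def mod_eq_dvd_iff algebra_simps)
  ultimately have "card (f ` A \<union> g ` A) = 2 * (nat h + 1)"
    using \<open>h \<ge> 0\<close> by (simp add: card_Un_disjoint card_image A_def)
  moreover have "f ` A \<union> g ` A \<subseteq> {0..<p}"
    using prime_gt_0_int[OF assms(1)] by (auto simp: f_def g_def)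
  then have "card (f ` A \<union> g ` A) \<le> nat p"
    by (metis card_atLeastLessThan_int card_mono finite_atLeastLessThan_int diff_zero)
  ultimately show False
    using assms(2) \<open>h \<ge> 0\<close> by (simp add: nat_add_distrib nat_mult_distrib)
qed

lemma balanced_residue:
  fixes m x :: int
  assumes "m > 1"
  obtains y k where "x = y + m * k" and "(2 * y)\<^sup>2 \<le> m\<^sup>2" and "(2 * y)\<^sup>2 = m\<^sup>2 \<Longrightarrow> 2 * y = m"
proof -
  define c where "c = (m - 1) div 2"
  define y where "y = (x + c) mod m - c"
  have "2 * c \<le> m - 1" "m - 2 \<le> 2 * c"
    unfolding c_def by presburger+
  moreover have "0 \<le> (x + c) mod m" "(x + c) mod m < m"
    using assms by simp_all
  ultimately have "- m < 2 * y" "2 * y \<le> m"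
    by (simp_all add: y_def)
  then have "\<bar>2 * y\<bar> \<le> \<bar>m\<bar>"
    by arith
  then have "(2 * y)\<^sup>2 \<le> m\<^sup>2"
    using abs_le_square_iff by blast
  moreover have "2 * y = m" if "(2 * y)\<^sup>2 = m\<^sup>2"
  proof -
    have "2 * y = m \<or> 2 * y = - m"
      using that power2_eq_iff by blast
    then show ?thesis
      using \<open>- m < 2 * y\<close> by linarith
  qed
  moreover have "x = y + m * ((x + c) div m)"
    unfolding y_def using mult_div_mod_eq[of m "x + c"] by linarith
  ultimately show ?thesis
    using that by blast
qed

lemma dvd_if_four_squares_half_residues:
  fixes p m :: int
  assumes "m * p = x1\<^sup>2 + x2\<^sup>2 + x3\<^sup>2 + x4\<^sup>2"
    and "x1 = y1 + m * k1" "x2 = y2 + m * k2" "x3 = y3 + m * k3" "x4 = y4 + m * k4"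
    and "2 * y1 = m" "2 * y2 = m" "2 * y3 = m" "2 * y4 = m" and "m \<noteq> 0"
  shows "m dvd p"
proof -
  have "4 * (m * p) = (2 * y1 + 2 * m * k1)\<^sup>2 + (2 * y2 + 2 * m * k2)\<^sup>2 + (2 * y3 + 2 * m * k3)\<^sup>2
      + (2 * y4 + 2 * m * k4)\<^sup>2"
    unfolding assms(1-5) by algebra
  also have "\<dots> = 4 * (m * (m * (1 + k1 + k1\<^sup>2 + k2 + k2\<^sup>2 + k3 + k3\<^sup>2 + k4 + k4\<^sup>2)))"
    unfolding assms(6-9) by algebra
  finally show ?thesis
    using assms(10) by simp
qed

lemma four_squares_reduce:
  fixes p m x1 x2 x3 x4 :: int
  assumes "1 < m" and "\<not> m dvd p" and x: "m * p = x1\<^sup>2 + x2\<^sup>2 + x3\<^sup>2 + x4\<^sup>2"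
  obtains y1 y2 y3 y4 k1 k2 k3 k4 r
  where "x1 = y1 + m * k1" "x2 = y2 + m * k2" "x3 = y3 + m * k3" "x4 = y4 + m * k4"
    and "y1\<^sup>2 + y2\<^sup>2 + y3\<^sup>2 + y4\<^sup>2 = m * r" and "0 < r" and "r < m"
proof -
  obtain y1 k1 where 1: "x1 = y1 + m * k1" "(2 * y1)\<^sup>2 \<le> m\<^sup>2" "(2 * y1)\<^sup>2 = m\<^sup>2 \<Longrightarrow> 2 * y1 = m"
    using balanced_residue[OF assms(1)] by metis
  obtain y2 k2 where 2: "x2 = y2 + m * k2" "(2 * y2)\<^sup>2 \<le> m\<^sup>2" "(2 * y2)\<^sup>2 = m\<^sup>2 \<Longrightarrow> 2 * y2 = m"
    using balanced_residue[OF assms(1)] by metis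
  obtain y3 k3 where 3: "x3 = y3 + m * k3" "(2 * y3)\<^sup>2 \<le> m\<^sup>2" "(2 * y3)\<^sup>2 = m\<^sup>2 \<Longrightarrow> 2 * y3 = m"
    using balanced_residue[OF assms(1)] by metis
  obtain y4 k4 where 4: "x4 = y4 + m * k4" "(2 * y4)\<^sup>2 \<le> m\<^sup>2" "(2 * y4)\<^sup>2 = m\<^sup>2 \<Longrightarrow> 2 * y4 = m"
    using balanced_residue[OF assms(1)] by metis
  define S where "S = y1\<^sup>2 + y2\<^sup>2 + y3\<^sup>2 + y4\<^sup>2"
  define K where "K = k1\<^sup>2 + k2\<^sup>2 + k3\<^sup>2 + k4\<^sup>2"
  have "m * p = S + m * (2 * (y1 * k1 + y2 * k2 + y3 * k3 + y4 * k4) + m * K)"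
    unfolding x 1(1) 2(1) 3(1) 4(1) S_def K_def by algebra
  then obtain r where r: "S = m * r"
    by (metis add_diff_cancel_right' right_diff_distrib)
  have "r \<noteq> 0"
  proof
    assume "r = 0"
    then have "y1 = 0" "y2 = 0" "y3 = 0" "y4 = 0"
      using r unfolding S_def by (auto simp: sum_power2_eq_zero_iff add_nonneg_eq_0_iff)
    then have "m * p = m * (m * K)"
      unfolding x 1(1) 2(1) 3(1) 4(1) K_def by algebra
    then show False
      using assms(1,2) by simp
  qed
  moreover have "0 \<le> m * r"
    unfolding r[symmetric] S_def by simp
  moreover have "4 * (m * r) \<le> 4 * (m * m)"
    using 1(2) 2(2) 3(2) 4(2) unfolding r[symmetric] S_def by (simp add: power_mult_distrib power2_eq_square)
  moreover have "r \<noteq> m"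
  proof
    assume "r = m"
    then have "(2 * y1)\<^sup>2 + (2 * y2)\<^sup>2 + (2 * y3)\<^sup>2 + (2 * y4)\<^sup>2 = 4 * m\<^sup>2"
      using r unfolding S_def by (simp add: power_mult_distrib power2_eq_square)
    then have "2 * y1 = m" "2 * y2 = m" "2 * y3 = m" "2 * y4 = m"
      using 1(2,3) 2(2,3) 3(2,3) 4(2,3) by (smt (verit))+
    then show False
      using dvd_if_four_squares_half_residues[OF x 1(1) 2(1) 3(1) 4(1)] assms(1,2) by force
  qed
  ultimately have "0 < r" "r < m"
    using assms(1) by (auto simp: zero_le_mult_iff)
  then show ?thesis
    using that 1(1) 2(1) 3(1) 4(1) r unfolding S_def by blast
qed

lemma four_squares_descent:
  fixes p m :: int
  assumes "prime p" and "1 < m" and "m < p" and "four_squares (m * p)"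
  shows "\<exists>r. 0 < r \<and> r < m \<and> four_squares (r * p)"
proof -
  have "\<not> m dvd p"
    using prime_int_not_dvd assms(1-3) by blast
  obtain x1 x2 x3 x4 where x: "m * p = x1\<^sup>2 + x2\<^sup>2 + x3\<^sup>2 + x4\<^sup>2"
    using assms(4) unfolding four_squares_def by blast
  obtain y1 y2 y3 y4 k1 k2 k3 k4 r
    where y: "x1 = y1 + m * k1" "x2 = y2 + m * k2" "x3 = y3 + m * k3" "x4 = y4 + m * k4"
      and r: "y1\<^sup>2 + y2\<^sup>2 + y3\<^sup>2 + y4\<^sup>2 = m * r" "0 < r" "r < m"
    by (rule four_squares_reduce[OF assms(2) \<open>\<not> m dvd p\<close> x])
  \<comment> \<open>Since \<open>y\<^sub>i \<equiv> x\<^sub>i (mod m)\<close>, all four terms of Euler's identity for \<open>x\<close> and \<open>y\<close> are divisible by \<open>m\<close>.\<close>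
  define u1 where "u1 = r + (k1 * y1 + k2 * y2 + k3 * y3 + k4 * y4)"
  define u2 where "u2 = k1 * y2 - k2 * y1 + k3 * y4 - k4 * y3"
  define u3 where "u3 = k1 * y3 - k3 * y1 + k4 * y2 - k2 * y4"
  define u4 where "u4 = k1 * y4 - k4 * y1 + k2 * y3 - k3 * y2"
  have u1: "x1 * y1 + x2 * y2 + x3 * y3 + x4 * y4 = m * u1"
    using r(1) unfolding u1_def y by algebra
  have u2: "x1 * y2 - x2 * y1 + x3 * y4 - x4 * y3 = m * u2"
    unfolding u2_def y by algebra
  have u3: "x1 * y3 - x3 * y1 + x4 * y2 - x2 * y4 = m * u3"
    unfolding u3_def y by algebra
  have u4: "x1 * y4 - x4 * y1 + x2 * y3 - x3 * y2 = m * u4"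
    unfolding u4_def y by algebra
  have "(m * p) * (m * r) = (m * u1)\<^sup>2 + (m * u2)\<^sup>2 + (m * u3)\<^sup>2 + (m * u4)\<^sup>2"
    using euler_four_square_identity[of x1 x2 x3 x4 y1 y2 y3 y4] unfolding x[symmetric] r(1) u1 u2 u3 u4 .
  then have "(m * m) * (r * p) = (m * m) * (u1\<^sup>2 + u2\<^sup>2 + u3\<^sup>2 + u4\<^sup>2)"
    by (simp add: power_mult_distrib power2_eq_square algebra_simps)
  moreover have "m * m \<noteq> 0"
    using assms(2) by simp
  ultimately have "r * p = u1\<^sup>2 + u2\<^sup>2 + u3\<^sup>2 + u4\<^sup>2"
    using mult_left_cancel by blast
  then show ?thesis
    using r(2,3) unfolding four_squares_def by blast
qed

lemma four_squares_prime:
  fixes p :: int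
  assumes "prime p"
  shows "four_squares p"
proof (cases "p = 2")
  case True
  have "(2::int) = 1\<^sup>2 + 1\<^sup>2 + 0\<^sup>2 + 0\<^sup>2"
    by simp
  then show ?thesis
    unfolding four_squares_def True by blast
next
  case False
  then obtain h where h: "p = 2 * h + 1"
    using assms prime_odd_int[OF assms] prime_ge_2_int[OF assms] by (metis oddE order_le_less)
  obtain x y where xy: "0 \<le> x" "x \<le> h" "0 \<le> y" "y \<le> h" "p dvd x\<^sup>2 + y\<^sup>2 + 1"
    using odd_prime_dvd_sum_two_squares_plus_one[OF assms h] by blast
  then obtain k where k: "x\<^sup>2 + y\<^sup>2 + 1 = k * p"
    by (metis dvd_def mult.commute)
  have "0 < h"
    using prime_ge_2_int[OF assms] h by linarith
  have "x\<^sup>2 \<le> h\<^sup>2" "y\<^sup>2 \<le> h\<^sup>2"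
    using xy by (simp_all add: power_mono)
  moreover have "2 * h\<^sup>2 + 1 < p * p"
    unfolding h using \<open>0 < h\<close> by (simp add: power2_eq_square algebra_simps add_pos_nonneg)
  ultimately have "k * p < p * p"
    using k by linarith
  moreover have "0 < k * p"
    using k by (smt (verit) zero_le_power2)
  ultimately have "0 < k" "k < p"
    using prime_gt_0_int[OF assms] by (simp_all add: zero_less_mult_iff)
  moreover have "four_squares (k * p)"
    unfolding four_squares_def k[symmetric] by (metis power_one zero_power2 add_0_right)
  moreover have "four_squares p" if "0 < m" "m < p" "four_squares (m * p)" for m
    using that
  proof (induction "nat m" arbitrary: m rule: less_induct)
    case less
    show ?case
    proof (cases "m = 1")
      case True
      then show ?thesis
        using less.prems by simp
    next
      case False
      then obtain r where "0 < r" "r < m" "four_squares (r * p)"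
        using four_squares_descent[OF assms _ less.prems(2,3)] less.prems(1) by auto
      then show ?thesis
        using less.hyps[of r] less.prems(2) by simp
    qed
  qed
  ultimately show ?thesis
    by blast
qed

lemma four_squares_nonneg:
  fixes n :: int
  assumes "0 \<le> n"
  shows "four_squares n"
proof -
  have "four_squares (int k)" for k
  proof (induction k rule: prime_divisors_induct)
    case zero
    have "int 0 = 0\<^sup>2 + 0\<^sup>2 + 0\<^sup>2 + 0\<^sup>2"
      by simp
    then show ?case
      unfolding four_squares_def by blast
  next
    case (unit x)
    then have "int x = 1\<^sup>2 + 0\<^sup>2 + 0\<^sup>2 + 0\<^sup>2"
      by simp
    then show ?case
      unfolding four_squares_def by blast
  next
    case (factor q x)
    then show ?case
      using four_squares_mult four_squares_prime[of "int q"] by simp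
  qed
  then show ?thesis
    using assms by (metis nonneg_int_cases)
qed

lemma four_squares_sum_UNIV4:
  assumes "four_squares n"
  obtains a :: "4 \<Rightarrow> int" where "n = (\<Sum>i\<in>UNIV. (a i)\<^sup>2)"
proof -
  obtain a1 a2 a3 a4 where "n = a1\<^sup>2 + a2\<^sup>2 + a3\<^sup>2 + a4\<^sup>2"
    using assms unfolding four_squares_def by blast
  moreover define a :: "4 \<Rightarrow> int"
    where "a i = (if i = 1 then a1 else if i = 2 then a2 else if i = 3 then a3 else a4)" for i
  ultimately have "n = (\<Sum>i\<in>UNIV. (a i)\<^sup>2)"
    by (simp add: sum_4 a_def)
  then show ?thesis
    using that by blast
qed

section \<open>Gauss's lemma for monic polynomials\<close>

lemma map_poly_of_int_mult:
  "map_poly (of_int :: int \<Rightarrow> 'a :: comm_ring_1) (p * q) = map_poly of_int p * map_poly of_int q"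
  by (intro poly_eqI) (simp add: coeff_map_poly coeff_mult)

lemma map_poly_of_rat_mult:
  "map_poly (of_rat :: rat \<Rightarrow> 'a :: field_char_0) (p * q) = map_poly of_rat p * map_poly of_rat q"
  by (intro poly_eqI) (simp add: coeff_map_poly coeff_mult of_rat_sum of_rat_mult)

lemma map_poly_of_rat_add:
  "map_poly (of_rat :: rat \<Rightarrow> 'a :: field_char_0) (p + q) = map_poly of_rat p + map_poly of_rat q"
  by (intro poly_eqI) (simp add: coeff_map_poly of_rat_add)

lemma rat_poly_clear_denominators:
  fixes f :: "rat poly"
  obtains a :: int and F :: "int poly" where "a > 0" and "map_poly of_int F = smult (of_int a) f"
proof -
  define den where "den i = snd (quotient_of (coeff f i))" for i
  define a where "a = (\<Prod>i\<le>degree f. den i)"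
  have den_pos: "den i > 0" for i
    unfolding den_def by (rule quotient_of_denom_pos')
  have integral: "of_int a * coeff f i \<in> \<int>" for i
  proof (cases "i \<le> degree f")
    case True
    then obtain k where k: "a = den i * k"
      unfolding a_def by (metis atMost_iff dvd_prodI finite_atMost dvdE)
    obtain n where "quotient_of (coeff f i) = (n, den i)"
      unfolding den_def by (metis prod.collapse)
    then have "coeff f i = of_int n / of_int (den i)"
      by (rule quotient_of_div)
    then have "of_int a * coeff f i = of_int (k * n)"
      using den_pos[of i] unfolding k by (simp add: field_simps)
    then show ?thesis
      by simp
  qed (simp add: coeff_eq_0)
  have "map_poly of_int (map_poly floor (smult (of_int a) f)) = smult (of_int a) f"
    using integral by (intro poly_eqI) (simp add: coeff_map_poly)
  moreover have "a > 0"
    unfolding a_def using den_pos by (simp add: prod_pos)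
  ultimately show ?thesis
    using that by blast
qed

lemma eq_if_dvd_factors_of_product:
  fixes a b c e :: int
  assumes "c * e = a * b" and "c dvd a" and "e dvd b" and "c \<ge> 0" and "e \<ge> 0"
    and "a > 0" and "b > 0"
  shows "c = a"
proof -
  obtain s t where s: "a = c * s" and t: "b = e * t"
    using assms(2,3) by (metis dvdE)
  then have "(c * e) * (s * t) = (c * e) * 1"
    using assms(1) by (simp add: algebra_simps)
  then have "s * t = 1"
    using assms(1,6,7) by simp
  moreover have "s > 0"
    using assms(4,6) s by (simp add: zero_less_mult_iff)
  ultimately show ?thesis
    using s zmult_eq_1_iff by fastforce
qed

lemma monic_factor_of_monic_int_poly_integral:
  fixes f g :: "rat poly" and q :: "int poly"
  assumes "lead_coeff f = 1" and "lead_coeff q = 1" and "map_poly of_int q = f * g"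
  shows "coeff f i \<in> \<int>"
proof -
  have "lead_coeff g = 1"
    using arg_cong[OF assms(3), of lead_coeff] assms(1,2) by (simp add: lead_coeff_mult lead_coeff_map_poly_nz)
  obtain a F where a: "a > 0" and F: "map_poly of_int F = smult (of_int a) f"
    by (rule rat_poly_clear_denominators)
  obtain b G where b: "b > 0" and G: "map_poly of_int G = smult (of_int b) g"
    by (rule rat_poly_clear_denominators)
  have coeff_F: "of_int (coeff F j) = of_int a * coeff f j" for j
    using arg_cong[OF F, of "\<lambda>p. coeff p j"] by (simp add: coeff_map_poly)
  have coeff_G: "of_int (coeff G j) = of_int b * coeff g j" for j
    using arg_cong[OF G, of "\<lambda>p. coeff p j"] by (simp add: coeff_map_poly)
  have "map_poly of_int (F * G) = (map_poly of_int (smult (a * b) q) :: rat poly)"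
    by (simp add: map_poly_of_int_mult F G assms(3) map_poly_smult mult_smult_left mult_smult_right mult.commute)
  then have "F * G = smult (a * b) q"
    by (intro poly_eqI) (metis coeff_map_poly of_int_0 of_int_eq_iff)
  then have "content F * content G = normalize (a * b) * content q"
    by (metis content_mult content_smult)
  moreover have "content q = 1"
    using content_dvd_coeff[of q "degree q"] assms(2) by (metis is_unit_content_iff)
  ultimately have product: "content F * content G = a * b"
    using a b by simp
  have "coeff F (degree f) = a" "coeff G (degree g) = b"
    using coeff_F[of "degree f"] coeff_G[of "degree g"] assms(1) \<open>lead_coeff g = 1\<close> by simp_all
  then have "content F dvd a" "content G dvd b"
    by (metis content_dvd_coeff)+
  moreover have "content F \<ge> 0" "content G \<ge> 0"
    by (metis abs_ge_zero normalize_content normalize_int_def)+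
  ultimately have "content F = a"
    using eq_if_dvd_factors_of_product[OF product _ _ _ _ a b] by blast
  then obtain k where "coeff F i = a * k"
    using content_dvd_coeff[of F i] by (metis dvdE)
  then show ?thesis
    using coeff_F[of i] a by (metis Ints_of_int mult_cancel_left of_int_eq_0_iff of_int_mult less_irrefl)
qed

section \<open>Integers of an imaginary quadratic field\<close>

lemma complex_of_real_of_rat [simp]: "complex_of_real (of_rat r) = of_rat r"
proof -
  obtain n e where "quotient_of r = (n, e)"
    by (metis prod.collapse)
  then have "r = of_int n / of_int e"
    by (rule quotient_of_div)
  then show ?thesis
    by (simp add: of_rat_divide)
qed

lemma Re_complex_of_rat [simp]: "Re (of_rat r) = of_rat r"
  by (metis complex_of_real_of_rat Re_complex_of_real)

lemma Im_complex_of_rat [simp]: "Im (of_rat r) = 0"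
  by (metis complex_of_real_of_rat Im_complex_of_real)

lemma linear_rat_poly_nonreal_root:
  fixes r :: "rat poly" and z :: complex
  assumes "degree r \<le> 1" and "Im z \<noteq> 0" and "poly (map_poly of_rat r) z = 0"
  shows "r = 0"
proof -
  have r: "r = [:coeff r 0, coeff r 1:]"
    using assms(1) by (intro poly_eqI) (auto simp: coeff_pCons coeff_eq_0 split: nat.split)
  have "poly (map_poly of_rat [:coeff r 0, coeff r 1:]) z = 0"
    using assms(3) by (subst (asm) r)
  then have root: "of_rat (coeff r 0) + z * of_rat (coeff r 1) = 0"
    by (simp add: map_poly_pCons)
  have "Im z * of_rat (coeff r 1) = Im (of_rat (coeff r 0) + z * of_rat (coeff r 1))"
    by simp
  also have "\<dots> = 0"
    using root by simp
  finally have c1: "coeff r 1 = 0"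
    using assms(2) by simp
  have "of_rat (coeff r 0) = Re (of_rat (coeff r 0) + z * of_rat (coeff r 1))"
    using \<open>coeff r 1 = 0\<close> by simp
  also have "\<dots> = 0"
    using root by simp
  finally show ?thesis
    using r c1 by simp
qed

lemma monic_quadratic_nonreal_root_integral:
  fixes m :: "rat poly" and q :: "int poly" and z :: complex
  assumes "degree m = 2" and "lead_coeff m = 1" and "poly (map_poly of_rat m) z = 0"
    and "Im z \<noteq> 0" and "lead_coeff q = 1" and "poly (map_poly of_int q) z = 0"
  shows "coeff m i \<in> \<int>"
proof -
  define Q where "Q = (map_poly of_int q :: rat poly)"
  have "map_poly of_rat Q = (map_poly of_int q :: complex poly)"
    unfolding Q_def by (simp add: map_poly_map_poly o_def)
  moreover have "map_poly of_rat Q =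
      map_poly of_rat (Q div m) * map_poly of_rat m + (map_poly of_rat (Q mod m) :: complex poly)"
    by (metis div_mult_mod_eq map_poly_of_rat_add map_poly_of_rat_mult)
  ultimately have "poly (map_poly of_rat (Q mod m)) z = 0"
    using assms(3,6) by (metis add_0 mult_zero_right poly_add poly_mult)
  moreover have "degree (Q mod m) \<le> 1"
    using degree_mod_less'[of m Q] assms(1,2) by fastforce
  ultimately have "Q mod m = 0"
    using linear_rat_poly_nonreal_root assms(4) by blast
  then have "map_poly of_int q = m * (Q div m)"
    unfolding Q_def by (metis mod_eq_0_iff_dvd dvd_mult_div_cancel)
  then show ?thesis
    using monic_factor_of_monic_int_poly_integral assms(2,5) by blast
qed

definition quad :: "nat \<Rightarrow> rat \<Rightarrow> rat \<Rightarrow> complex" where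
  "quad d a b = of_rat a + of_rat b * \<i> * of_real (sqrt (real d))"

lemma quad_field_iff: "z \<in> quad_field d \<longleftrightarrow> (\<exists>a b. z = quad d a b)"
  by (simp add: quad_field_def quad_def)

lemma Re_quad [simp]: "Re (quad d a b) = of_rat a"
  by (simp add: quad_def)

lemma Im_quad [simp]: "Im (quad d a b) = of_rat b * sqrt (real d)"
  by (simp add: quad_def)

lemma quad_mult: "quad d a b * quad d a' b' = quad d (a * a' - of_nat d * b * b') (a * b' + a' * b)"
  by (simp add: complex_eq_iff of_rat_add of_rat_mult of_rat_diff algebra_simps)

lemma cnj_quad: "cnj (quad d a b) = quad d a (- b)"
  by (simp add: complex_eq_iff of_rat_minus)

lemma quad_rat: "quad d a 0 = of_rat a"
  by (simp add: quad_def)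

lemma quad_mult_cnj: "quad d a b * cnj (quad d a b) = of_rat (a\<^sup>2 + of_nat d * b\<^sup>2)"
  by (simp add: cnj_quad quad_mult quad_rat power2_eq_square)

lemma brahmagupta_identity:
  fixes a b a' b' D :: "'a :: comm_ring_1"
  shows "(a * a' - D * b * b')\<^sup>2 + D * (a * b' + a' * b)\<^sup>2 = (a\<^sup>2 + D * b\<^sup>2) * (a'\<^sup>2 + D * b'\<^sup>2)"
  by (simp add: power2_eq_square algebra_simps)

lemma alg_int_iff_algebraic_int: "alg_int z \<longleftrightarrow> algebraic_int z"
  by (auto simp: alg_int_def algebraic_int_altdef_ipoly)

lemma algebraic_int_quad_iff:
  assumes "d > 0"
  shows "algebraic_int (quad d a b) \<longleftrightarrow> 2 * a \<in> \<int> \<and> a\<^sup>2 + of_nat d * b\<^sup>2 \<in> \<int>"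
proof -
  define m where "m = [:a\<^sup>2 + of_nat d * b\<^sup>2, - 2 * a, 1:]"
  have m_root: "poly (map_poly of_rat m) (quad d a b) = 0"
    by (simp add: m_def map_poly_pCons complex_eq_iff of_rat_add of_rat_mult of_rat_minus
        of_rat_power power2_eq_square algebra_simps)
  show ?thesis
  proof
    assume int: "algebraic_int (quad d a b)"
    show "2 * a \<in> \<int> \<and> a\<^sup>2 + of_nat d * b\<^sup>2 \<in> \<int>"
    proof (cases "b = 0")
      case True
      then have "of_rat a \<in> (\<int> :: complex set)"
        using int rational_algebraic_int_is_int[of "of_rat a"] by (simp add: quad_rat)
      then have "a \<in> \<int>"
        by (metis Ints_cases Ints_of_int of_rat_eq_iff of_rat_of_int_eq)
      then show ?thesis
        using True by simp
    next
      case False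
      obtain q where "poly (map_poly of_int q) (quad d a b) = 0" "lead_coeff q = 1"
        using int by (auto simp: algebraic_int_altdef_ipoly)
      then have "coeff m i \<in> \<int>" for i
        using False assms m_root
        by (intro monic_quadratic_nonreal_root_integral[of m "quad d a b" q]) (simp_all add: m_def)
      from this[of 0] this[of 1] show ?thesis
        by (simp add: m_def)
    qed
  next
    assume "2 * a \<in> \<int> \<and> a\<^sup>2 + of_nat d * b\<^sup>2 \<in> \<int>"
    then obtain t n where "2 * a = of_int t" and "a\<^sup>2 + of_nat d * b\<^sup>2 = of_int n"
      by (auto elim!: Ints_cases)
    then have "\<forall>i. coeff (map_poly of_rat m :: complex poly) i \<in> \<int>"
      by (auto simp: m_def coeff_map_poly coeff_pCons of_rat_minus split: nat.split)
    then show "algebraic_int (quad d a b)"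
      using m_root by (intro algebraic_int.intros[of "map_poly of_rat m"])
        (simp_all add: m_def lead_coeff_map_poly_nz)
  qed
qed

lemma squarefree_mult_square_Ints:
  fixes w :: rat
  assumes "squarefree d" and "of_nat d * w\<^sup>2 \<in> \<int>"
  shows "w \<in> \<int>"
proof -
  obtain n e where ne: "quotient_of w = (n, e)"
    by (metis prod.collapse)
  have "e > 0" and "coprime n e" and w: "w = of_int n / of_int e"
    using ne quotient_of_denom_pos quotient_of_coprime quotient_of_div by blast+
  obtain k where "of_nat d * w\<^sup>2 = of_int k"
    using assms(2) by (elim Ints_cases)
  then have "of_int (int d * n\<^sup>2) = (of_int (k * e\<^sup>2) :: rat)"
    using \<open>e > 0\<close> unfolding w by (simp add: field_simps power2_eq_square)
  then have "e\<^sup>2 dvd int d * n\<^sup>2"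
    by (metis dvd_triv_right of_int_eq_iff)
  then have "e\<^sup>2 dvd int d"
    using \<open>coprime n e\<close> by (simp add: coprime_dvd_mult_left_iff coprime_commute)
  then have "(nat e)\<^sup>2 dvd d"
    using \<open>e > 0\<close> by (metis int_dvd_int_iff of_nat_power nat_0_le less_imp_le)
  then have "is_unit (nat e)"
    using assms(1) squarefreeD by blast
  then have "e = 1"
    using \<open>e > 0\<close> by simp
  then show ?thesis
    using w by simp
qed

lemma algebraic_int_quad_double_Ints:
  assumes "squarefree d" and "algebraic_int (quad d a b)"
  shows "2 * a \<in> \<int>" and "2 * b \<in> \<int>"
proof -
  have "d > 0"
    using assms(1) by (metis gr0I not_squarefree_0)
  then have "2 * a \<in> \<int>" and "a\<^sup>2 + of_nat d * b\<^sup>2 \<in> \<int>"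
    using assms(2) algebraic_int_quad_iff by blast+
  then obtain t n where t: "2 * a = of_int t" and n: "a\<^sup>2 + of_nat d * b\<^sup>2 = of_int n"
    by (auto elim!: Ints_cases)
  have "of_nat d * (2 * b)\<^sup>2 = 4 * (a\<^sup>2 + of_nat d * b\<^sup>2) - (2 * a)\<^sup>2"
    by (simp add: algebra_simps power2_eq_square)
  also have "\<dots> = of_int (4 * n - t\<^sup>2)"
    unfolding t n by simp
  finally have "of_nat d * (2 * b)\<^sup>2 \<in> \<int>"
    by (simp only: Ints_of_int)
  then show "2 * b \<in> \<int>"
    by (rule squarefree_mult_square_Ints[OF assms(1)])
  show "2 * a \<in> \<int>"
    using t by simp
qed

lemma of_int_mem_ring_of_ints: "of_int k \<in> ring_of_ints d"
proof -
  have "of_int k = quad d (of_int k) 0"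
    by (simp add: quad_rat)
  then show ?thesis
    unfolding ring_of_ints_def quad_field_iff alg_int_iff_algebraic_int
    using algebraic_int_of_int by blast
qed

lemma cnj_mem_ring_of_ints:
  assumes "x \<in> ring_of_ints d"
  shows "cnj x \<in> ring_of_ints d"
proof -
  obtain a b where "x = quad d a b"
    using assms unfolding ring_of_ints_def quad_field_iff by blast
  then have "cnj x = quad d a (- b)"
    by (simp add: cnj_quad)
  moreover have "algebraic_int (cnj x)"
    using assms by (simp add: ring_of_ints_def alg_int_iff_algebraic_int)
  ultimately show ?thesis
    unfolding ring_of_ints_def quad_field_iff alg_int_iff_algebraic_int by blast
qed

section \<open>Prime ideals above a ramified prime\<close>

lemma prime_ideal_of_int_mem_dvd:
  assumes "prime_ideal d P" and "prime p" and "of_nat p \<in> P" and "of_int k \<in> P"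
  shows "int p dvd k"
proof (rule ccontr)
  assume "\<not> int p dvd k"
  then have "coprime (int p) k"
    using assms(2) by (intro prime_imp_coprime) auto
  then obtain u v where uv: "u * int p + v * k = 1"
    by (metis bezout_int coprime_iff_gcd_eq_1)
  have ideal: "is_ideal d P"
    using assms(1) unfolding prime_ideal_def by blast
  then have "of_int u * of_nat p + of_int v * of_int k \<in> P"
    using assms(3,4) of_int_mem_ring_of_ints unfolding is_ideal_def by blast
  then have "(1 :: complex) \<in> P"
    using uv by (metis of_int_1 of_int_add of_int_mult of_int_of_nat_eq)
  then have "ring_of_ints d \<subseteq> P"
    using ideal unfolding is_ideal_def by (metis mult.right_neutral subsetI)
  then show False
    using assms(1) ideal unfolding prime_ideal_def is_ideal_def by blast
qed

lemma prime_ideal_norm_dvd: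
  assumes "prime_ideal d P" and "prime p" and "of_nat p \<in> P" and "d > 0" and "quad d a b \<in> P"
  shows "\<exists>n. a\<^sup>2 + of_nat d * b\<^sup>2 = of_nat p * of_int n"
proof -
  have ideal: "is_ideal d P"
    using assms(1) unfolding prime_ideal_def by blast
  then have "quad d a b \<in> ring_of_ints d"
    using assms(5) unfolding is_ideal_def by blast
  then have "cnj (quad d a b) * quad d a b \<in> P"
    using ideal assms(5) cnj_mem_ring_of_ints unfolding is_ideal_def by blast
  moreover obtain k where k: "a\<^sup>2 + of_nat d * b\<^sup>2 = of_int k"
    using \<open>quad d a b \<in> ring_of_ints d\<close> algebraic_int_quad_iff[OF assms(4)]
    by (auto simp: ring_of_ints_def alg_int_iff_algebraic_int elim!: Ints_cases)
  ultimately have "of_int k \<in> P"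
    using quad_mult_cnj[of d a b] by (simp add: mult.commute)
  then obtain n where "k = int p * n"
    using prime_ideal_of_int_mem_dvd[OF assms(1-3)] by (metis dvdE)
  then show ?thesis
    using k by simp
qed

lemma prime_ideal_mult_weight_mem_ring_of_ints:
  assumes "squarefree d" and "d = p * m" and "prime_ideal d P" and "prime p" and "of_nat p \<in> P"
    and "x \<in> P"
  shows "x * quad d (of_int a) (of_int b / of_nat p) \<in> ring_of_ints d"
proof -
  have "d > 0"
    using assms(1) by (metis gr0I not_squarefree_0)
  have "p > 0"
    using assms(4) prime_gt_0_nat by blast
  have "is_ideal d P"
    using assms(3) unfolding prime_ideal_def by blast
  then have "x \<in> ring_of_ints d"
    using assms(6) unfolding is_ideal_def by blast
  then obtain \<alpha> \<beta> where x: "x = quad d \<alpha> \<beta>" and "algebraic_int (quad d \<alpha> \<beta>)"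
    unfolding ring_of_ints_def quad_field_iff alg_int_iff_algebraic_int by blast
  then obtain s t where s: "2 * \<alpha> = of_int s" and t: "2 * \<beta> = of_int t"
    using algebraic_int_quad_double_Ints[OF assms(1)] by (metis Ints_cases)
  obtain n where n: "\<alpha>\<^sup>2 + of_nat d * \<beta>\<^sup>2 = of_nat p * of_int n"
    using prime_ideal_norm_dvd[OF assms(3-5) \<open>d > 0\<close>] assms(6) x by blast
  define a' b' where "a' = (of_int a :: rat)" and "b' = of_int b / (of_nat p :: rat)"
  define u v where "u = \<alpha> * a' - of_nat d * \<beta> * b'" and "v = \<alpha> * b' + a' * \<beta>"
  have trace: "2 * u = of_int (s * a - int m * t * b)"
    using \<open>p > 0\<close> unfolding u_def a'_def b'_def assms(2) of_int_diff of_int_mult s[symmetric] t[symmetric]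
    by (simp add: field_simps)
  have "u\<^sup>2 + of_nat d * v\<^sup>2 = (\<alpha>\<^sup>2 + of_nat d * \<beta>\<^sup>2) * (a'\<^sup>2 + of_nat d * b'\<^sup>2)"
    unfolding u_def v_def by (rule brahmagupta_identity)
  also have "\<dots> = of_nat p * of_int n * (a'\<^sup>2 + of_nat d * b'\<^sup>2)"
    unfolding n ..
  also have "\<dots> = of_int (n * (int p * a\<^sup>2 + int m * b\<^sup>2))"
    using \<open>p > 0\<close> unfolding a'_def b'_def assms(2) by (simp add: field_simps power2_eq_square)
  finally have "algebraic_int (quad d u v)"
    using trace algebraic_int_quad_iff[OF \<open>d > 0\<close>] by simp
  moreover have "x * quad d a' b' = quad d u v"
    unfolding x u_def v_def by (rule quad_mult)
  ultimately show ?thesis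
    unfolding ring_of_ints_def quad_field_iff alg_int_iff_algebraic_int a'_def b'_def by auto
qed

section \<open>The embedding into \<open>I\<^sub>4\<close>\<close>

lemma nonneg_linear_combination_of_coprime:
  fixes p m r :: int
  assumes "p > 0" and "m > 0" and "coprime p m" and "(p - 1) * m \<le> r"
  shows "\<exists>A B. A \<ge> 0 \<and> B \<ge> 0 \<and> p * A + m * B = r"
proof -
  obtain u v where uv: "u * m + v * p = 1"
    using assms(3) by (metis bezout_int coprime_iff_gcd_eq_1 gcd.commute)
  define B where "B = (r * u) mod p"
  define A where "A = r * v + m * ((r * u) div p)"
  have "p * ((r * u) div p) = r * u - B"
    unfolding B_def by (simp add: minus_mod_eq_mult_div)
  then have "p * A + m * B = r * (u * m + v * p)"
    unfolding A_def by algebra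
  then have sum: "p * A + m * B = r"
    using uv by simp
  have "0 \<le> B" "B \<le> p - 1"
    using assms(1) by (simp_all add: B_def)
  then have "m * B \<le> (p - 1) * m"
    using assms(2) by (simp add: mult.commute mult_left_mono)
  then have "0 \<le> p * A"
    using sum assms(4) by linarith
  then have "0 \<le> A"
    using assms(1) by (simp add: zero_le_mult_iff)
  then show ?thesis
    using sum \<open>0 \<le> B\<close> by blast
qed

lemma represented_by_I4_if_weights:
  fixes w :: "complex ^ 4"
  assumes "\<And>x i. x \<in> L \<Longrightarrow> x * w $ i \<in> ring_of_ints d"
    and "(\<Sum>i\<in>UNIV. w $ i * cnj (w $ i)) = c" and "c \<noteq> 0"
  shows "represented_by_I4 d L (\<lambda>x y. x * cnj y * c)"
  unfolding represented_by_I4_def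
proof (intro exI[of _ "\<lambda>x. \<chi> i. x * w $ i"] conjI ballI allI)
  show "inj_on (\<lambda>x. \<chi> i. x * w $ i) L"
  proof
    fix x y
    assume "(\<chi> i. x * w $ i) = (\<chi> i. y * w $ i)"
    then have "x * w $ i = y * w $ i" for i
      by (metis vec_lambda_beta)
    moreover obtain i where "w $ i \<noteq> 0"
      using assms(2,3) by force
    ultimately show "x = y"
      by (metis mult_cancel_right)
  qed
  fix x y
  have "(\<Sum>i\<in>UNIV. x * w $ i * cnj (y * w $ i)) = x * cnj y * (\<Sum>i\<in>UNIV. w $ i * cnj (w $ i))"
    by (simp add: sum_distrib_left algebra_simps)
  then show "(\<Sum>i\<in>UNIV. (\<chi> i. x * w $ i) $ i * cnj ((\<chi> i. y * w $ i) $ i)) = x * cnj y * c"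
    using assms(2) by simp
qed (simp_all add: assms(1) vec_eq_iff distrib_right)

lemma sum_norm_quad_weights:
  fixes a b :: "'n :: finite \<Rightarrow> int"
  assumes "d = p * m" and "p > 0"
  shows "(\<Sum>i\<in>UNIV. quad d (of_int (a i)) (of_int (b i) / of_nat p) *
            cnj (quad d (of_int (a i)) (of_int (b i) / of_nat p))) =
         of_rat (of_int (int p * (\<Sum>i\<in>UNIV. (a i)\<^sup>2) + int m * (\<Sum>i\<in>UNIV. (b i)\<^sup>2)) / of_nat p)"
proof -
  define F where "F i = (of_nat p * of_int ((a i)\<^sup>2) + of_nat m * of_int ((b i)\<^sup>2)) / (of_nat p :: rat)"
    for i
  have "quad d (of_int (a i)) (of_int (b i) / of_nat p) * cnj (quad d (of_int (a i)) (of_int (b i) / of_nat p)) =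
      of_rat (F i)" for i
    using assms unfolding quad_mult_cnj F_def by (simp add: field_simps power2_eq_square)
  then have "(\<Sum>i\<in>UNIV. quad d (of_int (a i)) (of_int (b i) / of_nat p) *
      cnj (quad d (of_int (a i)) (of_int (b i) / of_nat p))) = of_rat (\<Sum>i\<in>UNIV. F i)"
    by (simp add: of_rat_sum)
  also have "(\<Sum>i\<in>UNIV. F i) =
      of_int (int p * (\<Sum>i\<in>UNIV. (a i)\<^sup>2) + int m * (\<Sum>i\<in>UNIV. (b i)\<^sup>2)) / of_nat p"
    unfolding F_def
    by (simp only: sum_divide_distrib[symmetric] sum.distrib sum_distrib_left of_int_sum of_int_add
        of_int_mult of_int_of_nat_eq)
  finally show ?thesis .
qed

lemma four_squares_linear_combination:
  fixes p m r :: nat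
  assumes "p > 0" and "m > 0" and "coprime p m" and "(p - 1) * m \<le> r"
  obtains a b :: "4 \<Rightarrow> int" where "int p * (\<Sum>i\<in>UNIV. (a i)\<^sup>2) + int m * (\<Sum>i\<in>UNIV. (b i)\<^sup>2) = int r"
proof -
  have "(int p - 1) * int m \<le> int r"
    using assms(1,4) by (metis of_nat_1 of_nat_diff of_nat_le_iff of_nat_mult Suc_leI One_nat_def)
  then obtain A B where "A \<ge> 0" "B \<ge> 0" and r: "int p * A + int m * B = int r"
    using nonneg_linear_combination_of_coprime assms(1-3) by (metis of_nat_0_less_iff coprime_int_iff)
  moreover obtain a b :: "4 \<Rightarrow> int" where "A = (\<Sum>i\<in>UNIV. (a i)\<^sup>2)" and "B = (\<Sum>i\<in>UNIV. (b i)\<^sup>2)"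
    using four_squares_sum_UNIV4 four_squares_nonneg \<open>A \<ge> 0\<close> \<open>B \<ge> 0\<close> by metis
  ultimately show ?thesis
    using that by blast
qed

lemma squarefree_prime_coprime_cofactor:
  fixes p m :: nat
  assumes "squarefree (p * m)" and "prime p"
  shows "coprime p m"
proof -
  have "\<not> p dvd m"
  proof
    assume "p dvd m"
    then have "p\<^sup>2 dvd p * m"
      by (simp add: power2_eq_square mult_dvd_mono)
    then show False
      using assms squarefreeD not_prime_unit by blast
  qed
  then show ?thesis
    using assms(2) prime_imp_coprime by blast
qed

theorem theorem1:
  fixes d p r :: nat and P :: "complex set"
  assumes "squarefree d" and "d > 0"
    and "class_number d \<ge> 4"
    and "prime_ideal d P" and "\<not> principal_ideal d P"
    and "prime p" and "of_nat p \<in> P"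
    and "p dvd d"
    and "r > 0" and "real r \<ge> (real p - 1) * real d / real p"
  shows "represented_by_I4 d P (\<lambda>x y. x * cnj y * of_real (real r / real p))"
proof -
  obtain m where d: "d = p * m"
    using assms(8) by (elim dvdE)
  have "p > 0" and "m > 0"
    using assms(2,6) prime_gt_0_nat d by auto
  have "real ((p - 1) * m) \<le> real r"
    using assms(10) \<open>p > 0\<close> unfolding d by (simp add: of_nat_diff)
  then obtain a b :: "4 \<Rightarrow> int"
    where r: "int p * (\<Sum>i\<in>UNIV. (a i)\<^sup>2) + int m * (\<Sum>i\<in>UNIV. (b i)\<^sup>2) = int r"
    using four_squares_linear_combination \<open>p > 0\<close> \<open>m > 0\<close> squarefree_prime_coprime_cofactor assms(1,6) d
    by (metis of_nat_le_iff)
  define w where "w = (\<chi> i. quad d (of_int (a i)) (of_int (b i) / of_nat p))"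
  show ?thesis
  proof (rule represented_by_I4_if_weights)
    show "x * w $ i \<in> ring_of_ints d" if "x \<in> P" for x i
      using prime_ideal_mult_weight_mem_ring_of_ints[OF assms(1) d assms(4,6,7) that] by (simp add: w_def)
    show "(\<Sum>i\<in>UNIV. w $ i * cnj (w $ i)) = of_real (real r / real p)"
      using sum_norm_quad_weights[OF d \<open>p > 0\<close>, of a b] unfolding w_def r by (simp add: of_rat_divide)
    show "complex_of_real (real r / real p) \<noteq> 0"
      using assms(9) \<open>p > 0\<close> by simp
  qed
qed

end
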